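(* Let $n\ge 2$, $s\in\mathbb{R}$, and let $u\in C^2((0,\infty))$. Then $$u(r)-u(r\tau)+\big(u(r)-u(\tfrac{r}{\tau})\big)\tau^{-n+2s}\le 0\quad\text{for all } r>0,\ \tau\ge1$$ holds if and only if $$u''(r)+(n-2s+1)\frac{u'(r)}{r}\ge 0\quad\text{for all } r>0.$$
   Context: $u$ is viewed as a radial function $x\mapsto u(|x|)$ on $\mathbb{R}^n$. *)

theory Defs
  imports "HOL-Analysis.Analysis"
begin

end

theory Submission
  imports Defs
begin

text \<open>Write \<open>c = 2s - n\<close> and \<open>p = 1 - c\<close>. The differential inequality says exactly that
  \<open>x^p u'(x)\<close> is nondecreasing. Then \<open>\<rho> \<mapsto> u(\<rho>) - \<tau>^c u(\<rho>/\<tau>)\<close> has derivative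
  \<open>u'(\<rho>) - \<tau>^(c-1) u'(\<rho>/\<tau>) \<ge> 0\<close>, and comparing its values at \<open>r\<close> and \<open>r\<tau>\<close> gives the
  two-point inequality. Conversely, for fixed \<open>r\<close> the left-hand side of the two-point inequality is a
  function of \<open>\<tau>\<close> vanishing to first order at \<open>\<tau> = 1\<close>, with second derivative
  \<open>-2r^2(u''(r) + p u'(r)/r)\<close> there; being \<open>\<le> 0\<close> for \<open>\<tau> \<ge> 1\<close> forces this to be \<open>\<le> 0\<close>.\<close>

lemma deriv2_nonpos_at_left_endpoint_max:
  fixes g g' :: "real \<Rightarrow> real"
  assumes dg: "\<And>x. x \<ge> a \<Longrightarrow> (g has_real_derivative g' x) (at x)"
    and dg': "(g' has_real_derivative L) (at a)"
    and crit: "g' a = 0"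
    and max: "\<And>x. x \<ge> a \<Longrightarrow> g x \<le> g a"
  shows "L \<le> 0"
proof (rule ccontr)
  assume "\<not> L \<le> 0"
  then obtain d where d: "d > 0" "\<And>h. h > 0 \<Longrightarrow> h < d \<Longrightarrow> g' a < g' (a + h)"
    using DERIV_pos_inc_right[OF dg'] by force
  obtain z where z: "a < z" "z < a + d/2" "g (a + d/2) - g a = d/2 * g' z"
    using MVT2[of a "a + d/2" g g'] dg d(1) by auto
  have "g' z > 0" using d(2)[of "z - a"] z crit by auto
  with d(1) have "d/2 * g' z > 0" by simp
  with z have "g (a + d/2) > g a" by simp
  with max[of "a + d/2"] d(1) show False by simp
qed

lemma powr_mult_deriv_mono:
  fixes p :: real and u' u'' :: "real \<Rightarrow> real"
  assumes du': "\<And>r. r > 0 \<Longrightarrow> (u' has_real_derivative u'' r) (at r)"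
    and ode: "\<And>r. r > 0 \<Longrightarrow> u'' r + p * u' r / r \<ge> 0"
    and "0 < x" "x \<le> y"
  shows "x powr p * u' x \<le> y powr p * u' y"
proof (rule DERIV_nonneg_imp_increasing_open[of x y])
  fix z assume "x < z" "z < y"
  then have z: "z > 0" using \<open>0 < x\<close> by simp
  have "((\<lambda>z. z powr p * u' z) has_real_derivative z powr p * (u'' z + p * u' z / z)) (at z)"
    using DERIV_mult[OF has_real_derivative_powr[OF z, of p] du'[OF z]] z
    by (simp add: powr_diff field_simps)
  moreover have "z powr p * (u'' z + p * u' z / z) \<ge> 0"
    using ode[OF z] by simp
  ultimately show "\<exists>y. ((\<lambda>z. z powr p * u' z) has_real_derivative y) (at z) \<and> 0 \<le> y"
    by blast
next
  show "continuous_on {x..y} (\<lambda>z. z powr p * u' z)"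
    using assms(3,4) DERIV_isCont[OF du']
    by (intro continuous_at_imp_continuous_on ballI continuous_intros) auto
qed (use assms in simp)

lemma two_point_inequality_if_ode:
  fixes c :: real and u u' u'' :: "real \<Rightarrow> real"
  assumes du: "\<And>r. r > 0 \<Longrightarrow> (u has_real_derivative u' r) (at r)"
    and du': "\<And>r. r > 0 \<Longrightarrow> (u' has_real_derivative u'' r) (at r)"
    and ode: "\<And>r. r > 0 \<Longrightarrow> u'' r + (1 - c) * u' r / r \<ge> 0"
    and r: "r > 0" and \<tau>: "\<tau> \<ge> 1"
  shows "u r - u (r * \<tau>) + (u r - u (r / \<tau>)) * \<tau> powr c \<le> 0"
proof -
  define D where "D = (\<lambda>\<rho>. u \<rho> - \<tau> powr c * u (\<rho> / \<tau>))"
  have "D r \<le> D (r * \<tau>)"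
  proof (rule DERIV_nonneg_imp_increasing_open[of r "r * \<tau>"])
    fix z assume "r < z" "z < r * \<tau>"
    then have z: "z > 0" using r by simp
    have "(D has_real_derivative u' z - \<tau> powr (c - 1) * u' (z / \<tau>)) (at z)"
      unfolding D_def using z \<tau>
      by (auto intro!: derivative_eq_intros DERIV_chain2[OF du] simp: powr_diff field_simps)
    moreover have "\<tau> powr (c - 1) * u' (z / \<tau>) \<le> u' z"
    proof -
      have "(z / \<tau>) powr (1 - c) * u' (z / \<tau>) \<le> z powr (1 - c) * u' z"
        using powr_mult_deriv_mono[OF du' ode, of "z / \<tau>" z] z \<tau>
        by (simp add: divide_le_eq)
      then have "z powr (1 - c) * (\<tau> powr (c - 1) * u' (z / \<tau>)) \<le> z powr (1 - c) * u' z"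
        using z \<tau> by (simp add: powr_divide powr_diff powr_minus field_simps)
      then show ?thesis using z by simp
    qed
    ultimately show "\<exists>y. (D has_real_derivative y) (at z) \<and> 0 \<le> y"
      by force
  next
    show "continuous_on {r..r * \<tau>} D"
      unfolding D_def using r \<tau>
      by (intro continuous_at_imp_continuous_on ballI continuous_intros
          continuous_at_compose[of _ "\<lambda>\<rho>. \<rho> / \<tau>" u, unfolded o_def] DERIV_isCont[OF du]) auto
  qed (use r \<tau> in simp)
  then show ?thesis unfolding D_def using \<tau> by (simp add: algebra_simps)
qed

lemma ode_if_two_point_inequality:
  fixes c :: real and u u' u'' :: "real \<Rightarrow> real"
  assumes du: "\<And>r. r > 0 \<Longrightarrow> (u has_real_derivative u' r) (at r)"
    and du': "\<And>r. r > 0 \<Longrightarrow> (u' has_real_derivative u'' r) (at r)"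
    and two_point: "\<And>\<tau>. \<tau> \<ge> 1 \<Longrightarrow> u r - u (r * \<tau>) + (u r - u (r / \<tau>)) * \<tau> powr c \<le> 0"
    and r: "r > 0"
  shows "u'' r + (1 - c) * u' r / r \<ge> 0"
proof -
  define g where "g = (\<lambda>\<tau>. u r - u (r * \<tau>) + (u r - u (r / \<tau>)) * \<tau> powr c)"
  define g' where "g' = (\<lambda>\<tau>. - (u' (r * \<tau>) * r) + u' (r / \<tau>) * (r / \<tau>^2) * \<tau> powr c
      + (u r - u (r / \<tau>)) * (c * \<tau> powr (c - 1)))"
  have chain: "((\<lambda>\<tau>. f (r * \<tau>)) has_real_derivative f' (r * \<tau>) * r) (at \<tau>)"
      "((\<lambda>\<tau>. f (r / \<tau>)) has_real_derivative f' (r / \<tau>) * (- r / \<tau>^2)) (at \<tau>)"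
    if df: "\<And>r. r > 0 \<Longrightarrow> (f has_real_derivative f' r) (at r)" and "\<tau> > 0" for f f' \<tau>
  proof -
    show "((\<lambda>\<tau>. f (r * \<tau>)) has_real_derivative f' (r * \<tau>) * r) (at \<tau>)"
      by (rule DERIV_chain2[OF df]) (use that r in \<open>auto intro!: derivative_eq_intros\<close>)
    show "((\<lambda>\<tau>. f (r / \<tau>)) has_real_derivative f' (r / \<tau>) * (- r / \<tau>^2)) (at \<tau>)"
      by (rule DERIV_chain2[OF df])
        (use that r in \<open>auto intro!: derivative_eq_intros simp: field_simps power2_eq_square\<close>)
  qed
  note chain_u = chain[OF du] and chain_u' = chain[OF du']
  have dg: "(g has_real_derivative g' \<tau>) (at \<tau>)" if "\<tau> \<ge> 1" for \<tau>
    unfolding g_def g'_def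
    by (rule derivative_eq_intros chain_u has_real_derivative_powr | use that in simp)+
  have dg': "(g' has_real_derivative - 2 * r^2 * (u'' r + (1 - c) * u' r / r)) (at 1)"
    unfolding g'_def
    by (rule derivative_eq_intros chain_u chain_u' has_real_derivative_powr | simp)+
      (use r in \<open>simp add: field_simps power2_eq_square\<close>)
  have "- 2 * r^2 * (u'' r + (1 - c) * u' r / r) \<le> 0"
  proof (rule deriv2_nonpos_at_left_endpoint_max[OF dg dg'])
    show "g' 1 = 0" unfolding g'_def by simp
    show "g \<tau> \<le> g 1" if "\<tau> \<ge> 1" for \<tau>
      using two_point[OF that] unfolding g_def by simp
  qed
  then show ?thesis using r by (simp add: zero_le_mult_iff)
qed

theorem theorem1p3:
  fixes n :: nat and s :: real and u u' u'' :: "real \<Rightarrow> real"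
  assumes "n \<ge> 2"
    and "\<And>r. r > 0 \<Longrightarrow> (u has_real_derivative u' r) (at r)"
    and "\<And>r. r > 0 \<Longrightarrow> (u' has_real_derivative u'' r) (at r)"
    and "continuous_on {0<..} u''"
  shows "(\<forall>r>0. \<forall>\<tau>\<ge>1. u r - u (r * \<tau>) + (u r - u (r / \<tau>)) * \<tau> powr (- real n + 2 * s) \<le> 0)
     \<longleftrightarrow> (\<forall>r>0. u'' r + (real n - 2 * s + 1) * u' r / r \<ge> 0)"
proof -
  have exponent: "real n - 2 * s + 1 = 1 - (- real n + 2 * s)" by simp
  show ?thesis
    unfolding exponent
    using ode_if_two_point_inequality[OF assms(2,3)] two_point_inequality_if_ode[OF assms(2,3)]
    by blast
qed

end
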